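(* Under the Sub-Gaussian Mixture Model described in the context, there exist universal constants $C_s,C_g,C_e>0$ such that if $s^2\ge C_s k$, then \[ \max\left\{\frac{\|\mathbf F-\mathbf F^*\|_1}{\|\mathbf F^*\|_1}:\ \eta(\mathbf F)\le\eta(\mathbf F^* ),\ \mathbf F\in\mathcal F\right\}\le C_g\exp\left[-\frac{s^2}{C_e}\right] \] with probability at least $1-\frac32 n^{-1}$.
   Context: Sub-Gaussian norm: for a real random variable $X$, $\|X\|_{\psi_2}=\inf\{t>0:\mathbb E\exp(X^2/t^2)\le 2\}$; for a random vector $\mathbf x\in\mathbb R^m$, $\|\mathbf x\|_{\psi_2}=\sup_{\|\mathbf u\|_2=1}\|\langle\mathbf x,\mathbf u\rangle\|_{\psi_2}$. Model: integers $n\ge 4$, $k\ge 2$ with $k\mid n$; unknown centers $\boldsymbol\mu_1,\dots,\boldsymbol\mu_k\in\mathbb R^d$; unknown labels $\sigma^*:[n]\to[k]$ with $|\{i:\sigma^*(i)=a\}|=n/k$ for every $a$. Observations $\mathbf h_i=\boldsymbol\mu_{\sigma^*(i)}+\mathbf g_i$, $i\in[n]$, with $\mathbf g_i$ independent sub-Gaussian random vectors, $\|\mathbf g_i\|_{\psi_2}\le\tau$. $\Delta=\min_{a\ne b}\|\boldsymbol\mu_a-\boldsymbol\mu_b\|_2$, $s=\Delta/\tau$. Oracle integer program: $\mathcal F=\{\mathbf F\in\{0,1\}^{n\times k}:\mathbf F\mathbf 1_k=\mathbf 1_n\}$; $\mathbf F^*\in\mathcal F$ with $F^*_{ja}=\mathbb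 1\{\sigma^*(j)=a\}$; $\bar{\mathbf h}_i=\boldsymbol\mu_{\sigma^*(i)}+4\mathbf g_i$; $\eta(\mathbf F)=\sum_{j}\sum_{a}\|\bar{\mathbf h}_j-\boldsymbol\mu_a\|_2^2F_{ja}$. $\|\cdot\|_1$ is the entrywise $\ell_1$ norm. *)

theory Defs
  imports "HOL-Probability.Probability"
begin

(* Vectors of R^d are represented as functions nat => real; only coordinates < d matter. *)
definition vinner :: "nat \<Rightarrow> (nat \<Rightarrow> real) \<Rightarrow> (nat \<Rightarrow> real) \<Rightarrow> real" where
  "vinner d x y = (\<Sum>l<d. x l * y l)"

definition vnorm :: "nat \<Rightarrow> (nat \<Rightarrow> real) \<Rightarrow> real" where
  "vnorm d x = sqrt (\<Sum>l<d. (x l)\<^sup>2)"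

(* sub-Gaussian (psi_2) norm of a real random variable; Inf {} = \<infinity> *)
definition psi2 :: "'a measure \<Rightarrow> ('a \<Rightarrow> real) \<Rightarrow> ereal" where
  "psi2 M X = Inf {ereal t | t. t > 0 \<and> (\<integral>\<^sup>+ \<omega>. ennreal (exp ((X \<omega>)\<^sup>2 / t\<^sup>2)) \<partial>M) \<le> 2}"

definition psi2_vec :: "'a measure \<Rightarrow> nat \<Rightarrow> ('a \<Rightarrow> nat \<Rightarrow> real) \<Rightarrow> ereal" where
  "psi2_vec M d x = (SUP u \<in> {u. vnorm d u = 1}. psi2 M (\<lambda>\<omega>. vinner d (x \<omega>) u))"

definition min_sep :: "nat \<Rightarrow> nat \<Rightarrow> (nat \<Rightarrow> nat \<Rightarrow> real) \<Rightarrow> real" where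
  "min_sep d k \<mu> = Min {vnorm d (\<lambda>l. \<mu> a l - \<mu> b l) | a b. a < k \<and> b < k \<and> a \<noteq> b}"

definition Fset :: "nat \<Rightarrow> nat \<Rightarrow> (nat \<Rightarrow> nat \<Rightarrow> real) set" where
  "Fset n k = {F. (\<forall>j a. F j a \<in> {0, 1}) \<and> (\<forall>j a. \<not> (j < n \<and> a < k) \<longrightarrow> F j a = 0)
                  \<and> (\<forall>j<n. (\<Sum>a<k. F j a) = 1)}"

definition Fstar :: "nat \<Rightarrow> nat \<Rightarrow> (nat \<Rightarrow> nat) \<Rightarrow> nat \<Rightarrow> nat \<Rightarrow> real" where
  "Fstar n k \<sigma> = (\<lambda>j a. if j < n \<and> a < k \<and> \<sigma> j = a then 1 else 0)"

definition l1m :: "nat \<Rightarrow> nat \<Rightarrow> (nat \<Rightarrow> nat \<Rightarrow> real) \<Rightarrow> real" where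
  "l1m n k F = (\<Sum>j<n. \<Sum>a<k. \<bar>F j a\<bar>)"

definition eta :: "nat \<Rightarrow> nat \<Rightarrow> nat \<Rightarrow> (nat \<Rightarrow> nat \<Rightarrow> real) \<Rightarrow> (nat \<Rightarrow> nat)
    \<Rightarrow> (nat \<Rightarrow> nat \<Rightarrow> real) \<Rightarrow> (nat \<Rightarrow> nat \<Rightarrow> real) \<Rightarrow> real" where
  "eta n k d \<mu> \<sigma> gw F = (\<Sum>j<n. \<Sum>a<k.
      (vnorm d (\<lambda>l. \<mu> (\<sigma> j) l + 4 * gw j l - \<mu> a l))\<^sup>2 * F j a)"

end

theory Submission
  imports Defs
begin

text \<open>Write \<open>\<Lambda> = s\<^sup>2/128\<close>. Moving point \<open>j\<close> from its own center \<open>\<mu>\<^sub>b\<close> to another center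
  \<open>\<mu>\<^sub>a\<close> changes its cost by \<open>\<delta>\<^sup>2 - 8\<delta>Z\<close>, where \<open>\<delta> = \<parallel>\<mu>\<^sub>a - \<mu>\<^sub>b\<parallel>\<close> and \<open>Z\<close> is the projection
  of the noise onto the unit direction from \<open>\<mu>\<^sub>b\<close> to \<open>\<mu>\<^sub>a\<close>; this is at least
  \<open>64\<tau>\<^sup>2(\<Lambda> - Y\<^sub>j)\<close> for the log-sum-exp score \<open>Y\<^sub>j\<close> of these projections, whose exponential
  has mean at most \<open>2k\<close> by the sub-Gaussian hypothesis. Hence every \<open>F\<close> at least as good as \<open>F\<^sup>*\<close>
  has \<open>\<Lambda>\<close> times its number of misclassified points bounded by the sum of their scores, and
  so by twice the sum of the scores exceeding \<open>\<Lambda>/2\<close>. These truncated scores are independent with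
  tiny exponential moments, and a Chernoff bound shows that their sum exceeds
  \<open>max 1 (n exp(-\<Lambda>/8)) \<Lambda>/2\<close> with probability at most \<open>1/n\<close>.\<close>

lemma vnorm_nonneg: "0 \<le> vnorm d x"
  unfolding vnorm_def by (simp add: sum_nonneg)

lemma vnorm_sq: "(vnorm d x)\<^sup>2 = (\<Sum>l<d. (x l)\<^sup>2)"
  unfolding vnorm_def by (simp add: sum_nonneg)

lemma vnorm_sq_shift_diff:
  "(vnorm d (\<lambda>l. m l + c * x l - p l))\<^sup>2 - (vnorm d (\<lambda>l. m l + c * x l - m l))\<^sup>2
   = (vnorm d (\<lambda>l. p l - m l))\<^sup>2 - 2 * c * vinner d x (\<lambda>l. p l - m l)"
  unfolding vnorm_sq vinner_def
  by (simp add: sum_subtractf[symmetric] sum_distrib_left power2_eq_square algebra_simps)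

lemma vinner_eq_vnorm_mult_normalized:
  "vinner d x v = vnorm d v * vinner d x (\<lambda>l. v l / vnorm d v)"
proof (cases "vnorm d v = 0")
  case True
  then have "(\<Sum>l<d. (v l)\<^sup>2) = 0" using vnorm_sq[of d v] by simp
  then have "\<forall>l\<in>{..<d}. v l = 0" by (subst (asm) sum_nonneg_eq_0_iff) auto
  then show ?thesis using True unfolding vinner_def by simp
next
  case False
  then show ?thesis unfolding vinner_def by (simp add: sum_divide_distrib[symmetric])
qed

lemma vnorm_normalized:
  assumes "vnorm d v \<noteq> 0"
  shows "vnorm d (\<lambda>l. v l / vnorm d v) = 1"
proof -
  have "(vnorm d (\<lambda>l. v l / vnorm d v))\<^sup>2 = (\<Sum>l<d. (v l / vnorm d v)\<^sup>2)"
    by (rule vnorm_sq)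
  also have "\<dots> = (\<Sum>l<d. (v l)\<^sup>2) / (vnorm d v)\<^sup>2"
    by (simp add: power_divide sum_divide_distrib)
  also have "\<dots> = (vnorm d v)\<^sup>2 / (vnorm d v)\<^sup>2" by (simp add: vnorm_sq)
  also have "\<dots> = 1" using assms by simp
  finally show ?thesis
    by (metis abs_of_nonneg power2_eq_1_iff real_sqrt_abs real_sqrt_one vnorm_nonneg)
qed

lemma vinner_restrict: "vinner d (restrict x {..<d}) u = vinner d x u"
  unfolding vinner_def by (rule sum.cong) auto

lemma vinner_measurable_PiM: "(\<lambda>x. vinner d x u) \<in> borel_measurable (PiM {..<d} (\<lambda>_. borel))"
  unfolding vinner_def
  by (intro borel_measurable_sum borel_measurable_times measurable_component_singleton) auto

lemma vinner_measurable:
  "(\<And>l. l < d \<Longrightarrow> (\<lambda>\<omega>. x \<omega> l) \<in> borel_measurable M) \<Longrightarrow>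
    (\<lambda>\<omega>. vinner d (x \<omega>) u) \<in> borel_measurable M"
  unfolding vinner_def by (intro borel_measurable_sum borel_measurable_times) auto

lemma vnorm_measurable:
  "(\<And>l. l < d \<Longrightarrow> (\<lambda>\<omega>. x \<omega> l) \<in> borel_measurable M) \<Longrightarrow>
    (\<lambda>\<omega>. vnorm d (x \<omega>)) \<in> borel_measurable M"
  unfolding vnorm_def
  by (intro borel_measurable_sum borel_measurable_power measurable_compose[OF _ borel_measurable_sqrt])
    auto

lemma finite_center_distances:
  fixes k :: nat
  shows "finite {vnorm d (\<lambda>l. \<mu> a l - \<mu> b l) | a b. a < k \<and> b < k \<and> a \<noteq> b}"
proof (rule finite_subset)
  show "{vnorm d (\<lambda>l. \<mu> a l - \<mu> b l) | a b. a < k \<and> b < k \<and> a \<noteq> b}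
    \<subseteq> (\<lambda>(a, b). vnorm d (\<lambda>l. \<mu> a l - \<mu> b l)) ` ({..<k} \<times> {..<k})" by auto
qed auto

lemma min_sep_le:
  "a < k \<Longrightarrow> b < k \<Longrightarrow> a \<noteq> b \<Longrightarrow> min_sep d k \<mu> \<le> vnorm d (\<lambda>l. \<mu> a l - \<mu> b l)"
  unfolding min_sep_def by (intro Min_le[OF finite_center_distances]) blast

lemma min_sep_nonneg:
  assumes "a < k" "b < k" "a \<noteq> b"
  shows "0 \<le> min_sep d k \<mu>"
  unfolding min_sep_def using assms
  by (subst Min_ge_iff[OF finite_center_distances]) (auto simp: vnorm_nonneg)

text \<open>For \<open>\<mu>\<^sub>a = \<mu>\<^sub>b\<close> the direction is \<open>0\<close>, since division by zero yields \<open>0\<close>.\<close>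

definition center_dir :: "nat \<Rightarrow> (nat \<Rightarrow> nat \<Rightarrow> real) \<Rightarrow> nat \<Rightarrow> nat \<Rightarrow> nat \<Rightarrow> real" where
  "center_dir d \<mu> b a = (\<lambda>l. (\<mu> a l - \<mu> b l) / vnorm d (\<lambda>l. \<mu> a l - \<mu> b l))"

definition noise_score ::
    "nat \<Rightarrow> nat \<Rightarrow> real \<Rightarrow> (nat \<Rightarrow> nat \<Rightarrow> real) \<Rightarrow> nat \<Rightarrow> (nat \<Rightarrow> real) \<Rightarrow> real" where
  "noise_score d k \<tau> \<mu> b x = ln (\<Sum>a<k. exp ((vinner d x (center_dir d \<mu> b a))\<^sup>2 / (2 * \<tau>\<^sup>2)))"

lemma center_dir_unit_or_zero:
  "vnorm d (center_dir d \<mu> b a) = 1 \<or> (\<forall>l. center_dir d \<mu> b a l = 0)"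
  unfolding center_dir_def by (cases "vnorm d (\<lambda>l. \<mu> a l - \<mu> b l) = 0") (auto simp: vnorm_normalized)

lemma sq_vinner_center_dir_le_noise_score:
  assumes "a < k" "\<tau> > 0"
  shows "(vinner d x (center_dir d \<mu> b a))\<^sup>2 \<le> 2 * \<tau>\<^sup>2 * noise_score d k \<tau> \<mu> b x"
proof -
  let ?q = "\<lambda>a. (vinner d x (center_dir d \<mu> b a))\<^sup>2 / (2 * \<tau>\<^sup>2)"
  have "exp (?q a) \<le> (\<Sum>a<k. exp (?q a))"
    using assms by (intro member_le_sum) auto
  then have "ln (exp (?q a)) \<le> noise_score d k \<tau> \<mu> b x"
    unfolding noise_score_def by (intro ln_mono) auto
  then show ?thesis using assms by (simp add: divide_simps mult.commute)
qed

lemma noise_score_restrict: "noise_score d k \<tau> \<mu> b (restrict x {..<d}) = noise_score d k \<tau> \<mu> b x"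
  unfolding noise_score_def vinner_restrict ..

lemma noise_score_measurable_PiM:
  "noise_score d k \<tau> \<mu> b \<in> borel_measurable (PiM {..<d} (\<lambda>_. borel))"
  unfolding noise_score_def using vinner_measurable_PiM[measurable] by measurable

lemma noise_score_measurable:
  "(\<And>l. l < d \<Longrightarrow> (\<lambda>\<omega>. x \<omega> l) \<in> borel_measurable M) \<Longrightarrow>
    (\<lambda>\<omega>. noise_score d k \<tau> \<mu> b (x \<omega>)) \<in> borel_measurable M"
  unfolding noise_score_def
  by (intro borel_measurable_ln borel_measurable_sum measurable_compose[OF _ borel_measurable_exp]
      borel_measurable_divide borel_measurable_power vinner_measurable) auto

lemma cost_gap_ge_noise_score:
  assumes ab: "a < k" "b < k" "a \<noteq> b" and "\<tau> > 0"
  shows "(min_sep d k \<mu>)\<^sup>2 / 2 - 64 * \<tau>\<^sup>2 * noise_score d k \<tau> \<mu> b x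
    \<le> (vnorm d (\<lambda>l. \<mu> b l + 4 * x l - \<mu> a l))\<^sup>2 - (vnorm d (\<lambda>l. \<mu> b l + 4 * x l - \<mu> b l))\<^sup>2"
proof -
  define \<delta> where "\<delta> = vnorm d (\<lambda>l. \<mu> a l - \<mu> b l)"
  define Z where "Z = vinner d x (center_dir d \<mu> b a)"
  have "(vnorm d (\<lambda>l. \<mu> b l + 4 * x l - \<mu> a l))\<^sup>2 - (vnorm d (\<lambda>l. \<mu> b l + 4 * x l - \<mu> b l))\<^sup>2
      = \<delta>\<^sup>2 - 8 * (\<delta> * Z)"
    unfolding vnorm_sq_shift_diff \<delta>_def Z_def center_dir_def
    by (simp flip: vinner_eq_vnorm_mult_normalized)
  moreover have "\<delta>\<^sup>2 / 2 - 32 * Z\<^sup>2 \<le> \<delta>\<^sup>2 - 8 * (\<delta> * Z)"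
    using zero_le_power2[of "\<delta> - 8 * Z"] by (simp add: power2_eq_square algebra_simps)
  moreover have "(min_sep d k \<mu>)\<^sup>2 \<le> \<delta>\<^sup>2"
    unfolding \<delta>_def using ab by (intro power_mono min_sep_le min_sep_nonneg) auto
  moreover have "Z\<^sup>2 \<le> 2 * \<tau>\<^sup>2 * noise_score d k \<tau> \<mu> b x"
    unfolding Z_def using assms by (intro sq_vinner_center_dir_le_noise_score)
  ultimately show ?thesis by linarith
qed

lemma Fset_entry_01: "F \<in> Fset n k \<Longrightarrow> F j a = 0 \<or> F j a = 1"
  unfolding Fset_def by auto

lemma Fset_entry_bounds: "F \<in> Fset n k \<Longrightarrow> 0 \<le> F j a \<and> F j a \<le> 1"
  using Fset_entry_01[of F n k j a] by auto

lemma Fset_row_sum_remove: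
  assumes "F \<in> Fset n k" "j < n" "b < k"
  shows "(\<Sum>a\<in>{..<k}-{b}. F j a) = 1 - F j b"
proof -
  have "(\<Sum>a<k. F j a) = 1" using assms unfolding Fset_def by auto
  moreover have "(\<Sum>a<k. F j a) = F j b + (\<Sum>a\<in>{..<k}-{b}. F j a)"
    using assms(3) by (subst sum.remove[of _ b]) auto
  ultimately show ?thesis by linarith
qed

lemma Fset_finite: "finite (Fset n k)"
proof -
  define A where "A = {..<n} \<times> {..<k}"
  define \<phi> where "\<phi> F = restrict (\<lambda>p. F (fst p) (snd p)) A" for F :: "nat \<Rightarrow> nat \<Rightarrow> real"
  have "inj_on \<phi> (Fset n k)"
  proof (rule inj_onI, intro ext)
    fix F G j a assume "F \<in> Fset n k" "G \<in> Fset n k" "\<phi> F = \<phi> G"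
    then show "F j a = G j a"
      unfolding Fset_def \<phi>_def A_def by (cases "j < n \<and> a < k") (auto dest: fun_cong[of _ _ "(j, a)"])
  qed
  moreover have "\<phi> ` Fset n k \<subseteq> PiE A (\<lambda>_. {0, 1})"
    unfolding \<phi>_def Fset_def by (auto; meson)
  then have "finite (\<phi> ` Fset n k)"
    by (rule finite_subset) (auto intro: finite_PiE simp: A_def)
  ultimately show ?thesis using finite_imageD by blast
qed

lemma l1m_Fset_minus_Fstar:
  assumes F: "F \<in> Fset n k" and \<sigma>: "\<forall>j<n. \<sigma> j < k"
  shows "l1m n k (\<lambda>j a. F j a - Fstar n k \<sigma> j a) = 2 * (\<Sum>j<n. 1 - F j (\<sigma> j))"
proof -
  have "(\<Sum>a<k. \<bar>F j a - Fstar n k \<sigma> j a\<bar>) = 2 * (1 - F j (\<sigma> j))" if j: "j < n" for j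
  proof -
    have "(\<Sum>a<k. \<bar>F j a - Fstar n k \<sigma> j a\<bar>)
        = \<bar>F j (\<sigma> j) - 1\<bar> + (\<Sum>a\<in>{..<k}-{\<sigma> j}. \<bar>F j a - Fstar n k \<sigma> j a\<bar>)"
      using j \<sigma> by (subst sum.remove[of _ "\<sigma> j"]) (auto simp: Fstar_def)
    also have "(\<Sum>a\<in>{..<k}-{\<sigma> j}. \<bar>F j a - Fstar n k \<sigma> j a\<bar>) = (\<Sum>a\<in>{..<k}-{\<sigma> j}. F j a)"
      using Fset_entry_bounds[OF F] by (intro sum.cong) (auto simp: Fstar_def)
    finally show ?thesis
      using Fset_row_sum_remove[OF F j] Fset_entry_bounds[OF F, of j "\<sigma> j"] j \<sigma> by simp
  qed
  then show ?thesis unfolding l1m_def by (simp add: sum_distrib_left)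
qed

lemma l1m_Fstar:
  assumes "\<forall>j<n. \<sigma> j < k"
  shows "l1m n k (Fstar n k \<sigma>) = real n"
proof -
  have "(\<Sum>a<k. \<bar>Fstar n k \<sigma> j a\<bar>) = (\<Sum>a<k. if a = \<sigma> j then 1 else 0)" if "j < n" for j
    using that by (intro sum.cong) (auto simp: Fstar_def)
  then show ?thesis using assms unfolding l1m_def by simp
qed

lemma assignment_cost_excess_ge:
  assumes F: "F \<in> Fset n k" and \<sigma>: "\<forall>j<n. \<sigma> j < k"
    and gap: "\<And>j a. j < n \<Longrightarrow> a < k \<Longrightarrow> a \<noteq> \<sigma> j \<Longrightarrow> c j \<le> N j a - N j (\<sigma> j)"
  shows "(\<Sum>j<n. c j * (1 - F j (\<sigma> j)))
    \<le> (\<Sum>j<n. \<Sum>a<k. N j a * F j a) - (\<Sum>j<n. \<Sum>a<k. N j a * Fstar n k \<sigma> j a)"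
proof -
  have "c j * (1 - F j (\<sigma> j)) \<le> (\<Sum>a<k. N j a * F j a) - (\<Sum>a<k. N j a * Fstar n k \<sigma> j a)"
    if j: "j < n" for j
  proof -
    have s: "\<sigma> j < k" using \<sigma> j by auto
    have "(\<Sum>a<k. N j a * Fstar n k \<sigma> j a) = (\<Sum>a<k. if a = \<sigma> j then N j (\<sigma> j) else 0)"
      by (rule sum.cong) (auto simp: Fstar_def j)
    then have star: "(\<Sum>a<k. N j a * Fstar n k \<sigma> j a) = N j (\<sigma> j) * (\<Sum>a<k. F j a)"
      using s F j unfolding Fset_def by simp
    have "c j * (1 - F j (\<sigma> j)) = (\<Sum>a\<in>{..<k}-{\<sigma> j}. c j * F j a)"
      using Fset_row_sum_remove[OF F j s] by (simp flip: sum_distrib_left)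
    also have "\<dots> \<le> (\<Sum>a\<in>{..<k}-{\<sigma> j}. (N j a - N j (\<sigma> j)) * F j a)"
      using gap j Fset_entry_bounds[OF F] by (intro sum_mono mult_right_mono) auto
    also have "\<dots> = (\<Sum>a<k. (N j a - N j (\<sigma> j)) * F j a)"
      using s by (subst (2) sum.remove[of _ "\<sigma> j"]) auto
    finally show ?thesis
      unfolding star by (simp add: sum_distrib_left sum_subtractf left_diff_distrib)
  qed
  then have "(\<Sum>j<n. c j * (1 - F j (\<sigma> j)))
      \<le> (\<Sum>j<n. (\<Sum>a<k. N j a * F j a) - (\<Sum>a<k. N j a * Fstar n k \<sigma> j a))"
    by (intro sum_mono) auto
  then show ?thesis by (simp add: sum_subtractf)
qed

lemma misclassification_le_noise_scores:
  assumes F: "F \<in> Fset n k" and \<sigma>: "\<forall>j<n. \<sigma> j < k" and \<tau>: "\<tau> > 0"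
    and opt: "eta n k d \<mu> \<sigma> x F \<le> eta n k d \<mu> \<sigma> x (Fstar n k \<sigma>)"
  shows "(min_sep d k \<mu> / \<tau>)\<^sup>2 / 128 * (\<Sum>j<n. 1 - F j (\<sigma> j))
    \<le> (\<Sum>j<n. noise_score d k \<tau> \<mu> (\<sigma> j) (x j) * (1 - F j (\<sigma> j)))"
proof -
  define Y where "Y j = noise_score d k \<tau> \<mu> (\<sigma> j) (x j)" for j
  define e where "e j = 1 - F j (\<sigma> j)" for j
  have "(\<Sum>j<n. ((min_sep d k \<mu>)\<^sup>2 / 2 - 64 * \<tau>\<^sup>2 * Y j) * e j)
      \<le> eta n k d \<mu> \<sigma> x F - eta n k d \<mu> \<sigma> x (Fstar n k \<sigma>)"
    unfolding eta_def e_def Y_def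
    by (rule assignment_cost_excess_ge[OF F \<sigma>], rule cost_gap_ge_noise_score) (use \<sigma> \<tau> in auto)
  also have "\<dots> \<le> 0" using opt by simp
  also have "(\<Sum>j<n. ((min_sep d k \<mu>)\<^sup>2 / 2 - 64 * \<tau>\<^sup>2 * Y j) * e j)
      = (min_sep d k \<mu>)\<^sup>2 / 2 * sum e {..<n} - 64 * \<tau>\<^sup>2 * (\<Sum>j<n. Y j * e j)"
    by (simp add: left_diff_distrib right_diff_distrib sum_subtractf sum_distrib_left
        sum_distrib_right sum_divide_distrib mult_ac)
  also have "(min_sep d k \<mu>)\<^sup>2 / 2 = 64 * \<tau>\<^sup>2 * ((min_sep d k \<mu> / \<tau>)\<^sup>2 / 128)"
    using \<tau> by (simp add: power_divide)
  finally show ?thesis using \<tau> unfolding e_def Y_def by (simp flip: right_diff_distrib)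
qed

definition keep_above :: "real \<Rightarrow> real \<Rightarrow> real" where
  "keep_above c y = (if c \<le> y then y else 0)"

lemma keep_above_nonneg: "0 < c \<Longrightarrow> 0 \<le> keep_above c y"
  unfolding keep_above_def by auto

lemma sum_weight_le_sum_keep_above:
  assumes c: "0 < c" and e: "\<forall>j\<in>I. 0 \<le> e j" and le: "2 * c * sum e I \<le> (\<Sum>j\<in>I. Y j * e j)"
  shows "c * sum e I \<le> (\<Sum>j\<in>I. keep_above c (Y j) * e j)"
proof -
  have "(\<Sum>j\<in>I. Y j * e j) \<le> (\<Sum>j\<in>I. (c + keep_above c (Y j)) * e j)"
    using e c by (intro sum_mono mult_right_mono) (auto simp: keep_above_def)
  also have "\<dots> = c * sum e I + (\<Sum>j\<in>I. keep_above c (Y j) * e j)"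
    by (simp add: distrib_right sum.distrib sum_distrib_left)
  finally show ?thesis using le by linarith
qed

lemma sum_01_le_of_less_max_1:
  assumes "\<forall>j\<in>I. e j = 0 \<or> e j = (1::real)" "0 \<le> r" "sum e I < max 1 r"
  shows "sum e I \<le> r"
proof (cases "1 \<le> r \<or> infinite I")
  case False
  then have "sum e I < 1" using assms(3) by auto
  moreover have "e j \<le> sum e I" if "j \<in> I" for j
    using False that assms(1) by (intro member_le_sum) auto
  ultimately have "\<forall>j\<in>I. e j = 0" using assms(1) by force
  then show ?thesis using assms(2) by simp
qed (use assms in auto)

lemma misclassification_rate_le:
  assumes F: "F \<in> Fset n k" and \<sigma>: "\<forall>j<n. \<sigma> j < k" and \<tau>: "\<tau> > 0" and n: "n > 0"
    and opt: "eta n k d \<mu> \<sigma> x F \<le> eta n k d \<mu> \<sigma> x (Fstar n k \<sigma>)"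
    and \<Lambda>: "\<Lambda> = (min_sep d k \<mu> / \<tau>)\<^sup>2 / 128" "\<Lambda> > 0"
    and small: "(\<Sum>j<n. keep_above (\<Lambda> / 2) (noise_score d k \<tau> \<mu> (\<sigma> j) (x j)))
      < max 1 (real n * exp (- \<Lambda> / 8)) * \<Lambda> / 2"
  shows "l1m n k (\<lambda>j a. F j a - Fstar n k \<sigma> j a) / l1m n k (Fstar n k \<sigma>) \<le> 2 * exp (- \<Lambda> / 8)"
proof -
  define e where "e j = 1 - F j (\<sigma> j)" for j
  define U where "U j = keep_above (\<Lambda> / 2) (noise_score d k \<tau> \<mu> (\<sigma> j) (x j))" for j
  have e01: "e j = 0 \<or> e j = 1" for j using Fset_entry_01[OF F] unfolding e_def by force
  then have e_bounds: "0 \<le> e j" "e j \<le> 1" for j by (metis order.refl zero_le_one)+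
  have "\<Lambda> * sum e {..<n} \<le> (\<Sum>j<n. noise_score d k \<tau> \<mu> (\<sigma> j) (x j) * e j)"
    using misclassification_le_noise_scores[OF F \<sigma> \<tau> opt] unfolding \<Lambda>(1) e_def .
  then have "\<Lambda> / 2 * sum e {..<n} \<le> (\<Sum>j<n. U j * e j)"
    unfolding U_def using e_bounds \<Lambda>(2) by (intro sum_weight_le_sum_keep_above) auto
  also have "\<dots> \<le> (\<Sum>j<n. U j)"
    using e_bounds keep_above_nonneg \<Lambda>(2) unfolding U_def by (intro sum_mono mult_left_le) auto
  also have "\<dots> < \<Lambda> / 2 * max 1 (real n * exp (- \<Lambda> / 8))"
    using small unfolding U_def by (simp add: mult_ac)
  finally have "sum e {..<n} < max 1 (real n * exp (- \<Lambda> / 8))"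
    by (rule mult_left_less_imp_less) (use \<Lambda>(2) in simp)
  then have "sum e {..<n} \<le> real n * exp (- \<Lambda> / 8)"
    using e01 by (intro sum_01_le_of_less_max_1) auto
  then show ?thesis
    unfolding l1m_Fset_minus_Fstar[OF F \<sigma>] l1m_Fstar[OF \<sigma>] e_def[symmetric]
    using n by (simp add: divide_simps mult.commute)
qed

lemma (in prob_space) nn_integral_exp_sq_vinner_le_2:
  assumes \<tau>: "\<tau> > 0" and \<psi>: "psi2_vec M d x \<le> ereal \<tau>"
    and u: "vnorm d u = 1 \<or> (\<forall>l. u l = 0)"
  shows "(\<integral>\<^sup>+\<omega>. ennreal (exp ((vinner d (x \<omega>) u)\<^sup>2 / (2 * \<tau>\<^sup>2))) \<partial>M) \<le> 2"
proof (cases "vnorm d u = 1")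
  case True
  define X where "X = (\<lambda>\<omega>. vinner d (x \<omega>) u)"
  have "psi2 M X \<le> psi2_vec M d x"
    unfolding psi2_vec_def X_def by (rule SUP_upper) (use True in auto)
  also have "\<dots> < ereal (sqrt 2 * \<tau>)"
    using \<psi> by (rule le_less_trans) (use \<tau> in simp)
  finally obtain t where t: "t > 0" "t < sqrt 2 * \<tau>"
      "(\<integral>\<^sup>+\<omega>. ennreal (exp ((X \<omega>)\<^sup>2 / t\<^sup>2)) \<partial>M) \<le> 2"
    unfolding psi2_def Inf_less_iff by auto
  have "t\<^sup>2 \<le> (sqrt 2 * \<tau>)\<^sup>2" using t by (intro power_mono) auto
  then have "t\<^sup>2 \<le> 2 * \<tau>\<^sup>2" by (simp add: power_mult_distrib)
  then have "(X \<omega>)\<^sup>2 / (2 * \<tau>\<^sup>2) \<le> (X \<omega>)\<^sup>2 / t\<^sup>2" for \<omega>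
    using t(1) \<tau> by (intro divide_left_mono) auto
  then have "(\<integral>\<^sup>+\<omega>. ennreal (exp ((X \<omega>)\<^sup>2 / (2 * \<tau>\<^sup>2))) \<partial>M)
      \<le> (\<integral>\<^sup>+\<omega>. ennreal (exp ((X \<omega>)\<^sup>2 / t\<^sup>2)) \<partial>M)"
    by (intro nn_integral_mono ennreal_leI) simp
  then show ?thesis using t(3) unfolding X_def by simp
next
  case False
  then show ?thesis using u by (simp add: vinner_def emeasure_space_1)
qed

lemma (in prob_space) nn_integral_exp_noise_score_le:
  assumes \<tau>: "\<tau> > 0" and \<psi>: "psi2_vec M d x \<le> ereal \<tau>" and k: "0 < k"
    and x: "\<And>l. l < d \<Longrightarrow> (\<lambda>\<omega>. x \<omega> l) \<in> borel_measurable M"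
  shows "(\<integral>\<^sup>+\<omega>. ennreal (exp (noise_score d k \<tau> \<mu> b (x \<omega>))) \<partial>M) \<le> 2 * of_nat k"
proof -
  let ?q = "\<lambda>a \<omega>. exp ((vinner d (x \<omega>) (center_dir d \<mu> b a))\<^sup>2 / (2 * \<tau>\<^sup>2))"
  have "0 < (\<Sum>a<k. ?q a \<omega>)" for \<omega> using k by (intro sum_pos) auto
  then have "(\<integral>\<^sup>+\<omega>. ennreal (exp (noise_score d k \<tau> \<mu> b (x \<omega>))) \<partial>M)
      = (\<integral>\<^sup>+\<omega>. (\<Sum>a<k. ennreal (?q a \<omega>)) \<partial>M)"
    unfolding noise_score_def by (intro nn_integral_cong) simp
  also have "\<dots> = (\<Sum>a<k. \<integral>\<^sup>+\<omega>. ennreal (?q a \<omega>) \<partial>M)"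
    using vinner_measurable[OF x, measurable] by (intro nn_integral_sum) measurable
  also have "\<dots> \<le> (\<Sum>a<k. 2)"
    using \<tau> \<psi> center_dir_unit_or_zero by (intro sum_mono nn_integral_exp_sq_vinner_le_2) auto
  finally show ?thesis by (simp add: mult.commute)
qed

lemma (in prob_space) nn_integral_exp_half_keep_above_le:
  assumes "Y \<in> borel_measurable M"
  shows "(\<integral>\<^sup>+\<omega>. ennreal (exp (keep_above c (Y \<omega>) / 2)) \<partial>M)
    \<le> 1 + ennreal (exp (- c / 2)) * (\<integral>\<^sup>+\<omega>. ennreal (exp (Y \<omega>)) \<partial>M)"
proof -
  have "exp (keep_above c y / 2) \<le> 1 + exp (- c / 2) * exp y" for y
    by (cases "c \<le> y") (auto simp: keep_above_def simp flip: exp_add intro: add_increasing)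
  then have "ennreal (exp (keep_above c y / 2)) \<le> 1 + ennreal (exp (- c / 2)) * ennreal (exp y)" for y
    by (simp add: ennreal_leI flip: ennreal_mult ennreal_1 ennreal_plus)
  then have "(\<integral>\<^sup>+\<omega>. ennreal (exp (keep_above c (Y \<omega>) / 2)) \<partial>M)
      \<le> (\<integral>\<^sup>+\<omega>. 1 + ennreal (exp (- c / 2)) * ennreal (exp (Y \<omega>)) \<partial>M)"
    by (intro nn_integral_mono)
  also have "\<dots> = 1 + ennreal (exp (- c / 2)) * (\<integral>\<^sup>+\<omega>. ennreal (exp (Y \<omega>)) \<partial>M)"
    using assms by (subst nn_integral_add) (auto simp: nn_integral_cmult emeasure_space_1)
  finally show ?thesis .
qed

lemma (in prob_space) nn_integral_exp_truncated_score_le: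
  assumes "\<tau> > 0" and "psi2_vec M d x \<le> ereal \<tau>" and "0 < k"
    and meas: "\<And>l. l < d \<Longrightarrow> (\<lambda>\<omega>. x \<omega> l) \<in> borel_measurable M"
  shows "(\<integral>\<^sup>+\<omega>. ennreal (exp (keep_above (\<Lambda> / 2) (noise_score d k \<tau> \<mu> b (x \<omega>)) / 2)) \<partial>M)
    \<le> ennreal (1 + 2 * real k * exp (- \<Lambda> / 4))"
proof -
  have "(\<integral>\<^sup>+\<omega>. ennreal (exp (keep_above (\<Lambda> / 2) (noise_score d k \<tau> \<mu> b (x \<omega>)) / 2)) \<partial>M)
      \<le> 1 + ennreal (exp (- \<Lambda> / 4)) * (\<integral>\<^sup>+\<omega>. ennreal (exp (noise_score d k \<tau> \<mu> b (x \<omega>))) \<partial>M)"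
    using nn_integral_exp_half_keep_above_le[of "\<lambda>\<omega>. noise_score d k \<tau> \<mu> b (x \<omega>)" "\<Lambda> / 2"]
      noise_score_measurable[OF meas] by simp
  also have "\<dots> \<le> 1 + ennreal (exp (- \<Lambda> / 4)) * (2 * of_nat k)"
    using assms by (intro add_mono mult_left_mono nn_integral_exp_noise_score_le) auto
  finally show ?thesis by (simp add: ennreal_mult' ennreal_of_nat_eq_real_of_nat mult_ac)
qed

lemma (in prob_space) indep_sum_Chernoff:
  assumes I: "finite I" and indep: "indep_vars (\<lambda>_. borel) X I"
  shows "emeasure M {\<omega> \<in> space M. t \<le> (\<Sum>i\<in>I. X i \<omega>)}
    \<le> ennreal (exp (- t / 2)) * (\<Prod>i\<in>I. \<integral>\<^sup>+\<omega>. ennreal (exp (X i \<omega> / 2)) \<partial>M)"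
proof -
  have [measurable]: "X i \<in> borel_measurable M" if "i \<in> I" for i
    using indep that unfolding indep_vars_def by auto
  have "emeasure M {\<omega> \<in> space M. t \<le> (\<Sum>i\<in>I. X i \<omega>)}
      \<le> ennreal (exp (- (1/2) * t)) *
        (\<integral>\<^sup>+\<omega>. ennreal (exp (1/2 * (\<Sum>i\<in>I. X i \<omega>))) * indicator (space M) \<omega> \<partial>M)"
    by (rule Chernoff_ineq_nn_integral_ge) auto
  also have "(\<integral>\<^sup>+\<omega>. ennreal (exp (1/2 * (\<Sum>i\<in>I. X i \<omega>))) * indicator (space M) \<omega> \<partial>M)
      = (\<integral>\<^sup>+\<omega>. (\<Prod>i\<in>I. ennreal (exp (X i \<omega> / 2))) \<partial>M)"
    using I by (intro nn_integral_cong) (simp add: exp_sum sum_distrib_left prod_ennreal)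
  also have "\<dots> = (\<Prod>i\<in>I. \<integral>\<^sup>+\<omega>. ennreal (exp (X i \<omega> / 2)) \<partial>M)"
    by (intro indep_vars_nn_integral I indep_vars_compose2[OF indep]) auto
  finally show ?thesis by simp
qed

lemma Chernoff_exponent_le_inverse:
  fixes \<Lambda> :: real and n k :: nat
  assumes \<Lambda>: "16 * real k \<le> \<Lambda>" and k: "1 \<le> k" and n: "1 \<le> n"
  shows "exp (2 * real n * real k * exp (- \<Lambda> / 4) - max 1 (real n * exp (- \<Lambda> / 8)) * \<Lambda> / 4)
    \<le> 1 / real n"
proof -
  define m where "m = max 1 (real n * exp (- \<Lambda> / 8))"
  have \<Lambda>8: "8 \<le> \<Lambda>" using \<Lambda> k by linarith
  have m: "1 \<le> m" "real n * exp (- \<Lambda> / 8) \<le> m" unfolding m_def by auto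
  have "ln (real n) - \<Lambda> / 8 = ln (real n * exp (- \<Lambda> / 8))" using n by (simp add: ln_mult)
  also have "\<dots> \<le> real n * exp (- \<Lambda> / 8) - 1" using n by (intro ln_le_minus_one) simp
  finally have "ln (real n) \<le> m - 1 + \<Lambda> / 8" using m by linarith
  also have "\<dots> \<le> m * \<Lambda> / 8"
  proof -
    have "0 \<le> (m - 1) * (\<Lambda> / 8 - 1)" using m \<Lambda>8 by simp
    moreover have "(m - 1) * (\<Lambda> / 8 - 1) = m * \<Lambda> / 8 - m - \<Lambda> / 8 + 1" by (simp add: field_simps)
    ultimately show ?thesis by linarith
  qed
  finally have ln_n: "ln (real n) \<le> m * \<Lambda> / 8" .
  have "2 * real n * real k * exp (- \<Lambda> / 4) = (2 * real k * exp (- \<Lambda> / 8)) * (real n * exp (- \<Lambda> / 8))"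
    by (simp add: mult_ac flip: exp_add)
  also have "\<dots> \<le> (\<Lambda> / 8) * m"
  proof (intro mult_mono)
    show "2 * real k * exp (- \<Lambda> / 8) \<le> \<Lambda> / 8"
      using \<Lambda> \<Lambda>8 mult_left_mono[of "exp (- \<Lambda> / 8)" 1 "2 * real k"] by simp
  qed (use m \<Lambda>8 in auto)
  finally have "2 * real n * real k * exp (- \<Lambda> / 4) - m * \<Lambda> / 4 \<le> - ln (real n)"
    using ln_n by (simp add: algebra_simps)
  then have "exp (2 * real n * real k * exp (- \<Lambda> / 4) - m * \<Lambda> / 4) \<le> exp (- ln (real n))" by simp
  also have "\<dots> = 1 / real n" using n by (simp add: exp_minus inverse_eq_divide)
  finally show ?thesis unfolding m_def .
qed

lemma (in prob_space) noise_score_tail_le: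
  fixes g :: "nat \<Rightarrow> 'a \<Rightarrow> nat \<Rightarrow> real"
  assumes indep: "indep_vars (\<lambda>_. PiM {..<d} (\<lambda>_. borel)) (\<lambda>i \<omega>. restrict (g i \<omega>) {..<d}) {..<n}"
    and meas: "\<forall>i<n. \<forall>l<d. (\<lambda>\<omega>. g i \<omega> l) \<in> borel_measurable M"
    and \<tau>: "\<tau> > 0" and \<psi>: "\<forall>i<n. psi2_vec M d (g i) \<le> ereal \<tau>"
    and \<Lambda>: "16 * real k \<le> \<Lambda>" and k: "1 \<le> k" and n: "1 \<le> n"
  shows "emeasure M {\<omega> \<in> space M. max 1 (real n * exp (- \<Lambda> / 8)) * \<Lambda> / 2
      \<le> (\<Sum>j<n. keep_above (\<Lambda> / 2) (noise_score d k \<tau> \<mu> (\<sigma> j) (g j \<omega>)))} \<le> ennreal (1 / real n)"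
proof -
  define c where "c = exp (- \<Lambda> / 4)"
  define U where "U j \<omega> = keep_above (\<Lambda> / 2) (noise_score d k \<tau> \<mu> (\<sigma> j) (g j \<omega>))" for j \<omega>
  have "indep_vars (\<lambda>_. borel)
      (\<lambda>j \<omega>. keep_above (\<Lambda> / 2) (noise_score d k \<tau> \<mu> (\<sigma> j) (restrict (g j \<omega>) {..<d}))) {..<n}"
    using noise_score_measurable_PiM[measurable]
    by (intro indep_vars_compose2[OF indep]) (unfold keep_above_def, measurable)
  then have indep_U: "indep_vars (\<lambda>_. borel) U {..<n}"
    unfolding U_def noise_score_restrict .
  have factor: "(\<integral>\<^sup>+\<omega>. ennreal (exp (U j \<omega> / 2)) \<partial>M) \<le> ennreal (1 + 2 * real k * c)"
    if "j < n" for j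
    unfolding U_def c_def using \<tau> \<psi> meas k that by (intro nn_integral_exp_truncated_score_le) auto
  have "(\<Prod>j<n. \<integral>\<^sup>+\<omega>. ennreal (exp (U j \<omega> / 2)) \<partial>M) \<le> (\<Prod>j<n. ennreal (1 + 2 * real k * c))"
    by (rule prod_mono_ennreal) (use factor in auto)
  also have "\<dots> = ennreal ((1 + 2 * real k * c) ^ n)"
    by (simp add: c_def ennreal_power del: ennreal_plus)
  also have "\<dots> \<le> ennreal (exp (2 * real n * real k * c))"
  proof (rule ennreal_leI)
    have "(1 + 2 * real k * c) ^ n \<le> exp (2 * real k * c) ^ n"
      by (intro power_mono exp_ge_add_one_self) (simp add: c_def)
    then show "(1 + 2 * real k * c) ^ n \<le> exp (2 * real n * real k * c)"
      by (simp add: mult_ac flip: exp_of_nat_mult)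
  qed
  finally have moments: "(\<Prod>j<n. \<integral>\<^sup>+\<omega>. ennreal (exp (U j \<omega> / 2)) \<partial>M)
      \<le> ennreal (exp (2 * real n * real k * c))" .
  define m where "m = max 1 (real n * exp (- \<Lambda> / 8))"
  have "emeasure M {\<omega> \<in> space M. m * \<Lambda> / 2 \<le> (\<Sum>j<n. U j \<omega>)}
      \<le> ennreal (exp (- (m * \<Lambda> / 2) / 2)) * (\<Prod>j<n. \<integral>\<^sup>+\<omega>. ennreal (exp (U j \<omega> / 2)) \<partial>M)"
    by (rule indep_sum_Chernoff[OF _ indep_U]) simp
  also have "\<dots> \<le> ennreal (exp (- (m * \<Lambda> / 2) / 2)) * ennreal (exp (2 * real n * real k * c))"
    by (rule mult_left_mono[OF moments]) simp
  also have "\<dots> = ennreal (exp (2 * real n * real k * c - m * \<Lambda> / 4))"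
    by (simp flip: ennreal_mult exp_add)
  also have "\<dots> \<le> ennreal (1 / real n)"
    using Chernoff_exponent_le_inverse[OF \<Lambda> k n] unfolding c_def m_def by (intro ennreal_leI) simp
  finally show ?thesis unfolding U_def m_def .
qed

lemma eta_measurable:
  "(\<And>j l. j < n \<Longrightarrow> l < d \<Longrightarrow> (\<lambda>\<omega>. x j \<omega> l) \<in> borel_measurable M) \<Longrightarrow>
    (\<lambda>\<omega>. eta n k d \<mu> \<sigma> (\<lambda>j. x j \<omega>) F) \<in> borel_measurable M"
  unfolding eta_def
  by (intro borel_measurable_sum borel_measurable_times borel_measurable_power vnorm_measurable
      borel_measurable_diff borel_measurable_add borel_measurable_const) auto

lemma (in prob_space) oracle_misclassification_rate_bound:
  fixes g :: "nat \<Rightarrow> 'a \<Rightarrow> nat \<Rightarrow> real"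
  assumes n: "1 \<le> n" and k: "1 \<le> k" and \<sigma>: "\<forall>i<n. \<sigma> i < k"
    and meas: "\<forall>i<n. \<forall>l<d. (\<lambda>\<omega>. g i \<omega> l) \<in> borel_measurable M"
    and indep: "indep_vars (\<lambda>_. PiM {..<d} (\<lambda>_. borel)) (\<lambda>i \<omega>. restrict (g i \<omega>) {..<d}) {..<n}"
    and \<tau>: "\<tau> > 0" and \<psi>: "\<forall>i<n. psi2_vec M d (g i) \<le> ereal \<tau>"
    and sep: "2048 * real k \<le> (min_sep d k \<mu> / \<tau>)\<^sup>2"
  shows "1 - 1 / real n \<le> prob {\<omega> \<in> space M. \<forall>F \<in> Fset n k.
      eta n k d \<mu> \<sigma> (\<lambda>j. g j \<omega>) F \<le> eta n k d \<mu> \<sigma> (\<lambda>j. g j \<omega>) (Fstar n k \<sigma>) \<longrightarrow>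
      l1m n k (\<lambda>j a. F j a - Fstar n k \<sigma> j a) / l1m n k (Fstar n k \<sigma>)
        \<le> 2 * exp (- (min_sep d k \<mu> / \<tau>)\<^sup>2 / 1024)}" (is "_ \<le> prob ?good")
proof -
  define \<Lambda> where "\<Lambda> = (min_sep d k \<mu> / \<tau>)\<^sup>2 / 128"
  define S where "S \<omega> = (\<Sum>j<n. keep_above (\<Lambda> / 2) (noise_score d k \<tau> \<mu> (\<sigma> j) (g j \<omega>)))" for \<omega>
  define bad where "bad = {\<omega> \<in> space M. max 1 (real n * exp (- \<Lambda> / 8)) * \<Lambda> / 2 \<le> S \<omega>}"
  have \<Lambda>: "16 * real k \<le> \<Lambda>" "0 < \<Lambda>" using sep k unfolding \<Lambda>_def by auto
  have [measurable]: "(\<lambda>\<omega>. g j \<omega> l) \<in> borel_measurable M" if "j < n" "l < d" for j l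
    using meas that by auto
  have [measurable]: "S \<in> borel_measurable M"
    unfolding S_def keep_above_def using noise_score_measurable by measurable
  have [measurable]: "(\<lambda>\<omega>. eta n k d \<mu> \<sigma> (\<lambda>j. g j \<omega>) F) \<in> borel_measurable M" for F
    by (rule eta_measurable) auto
  have "?good \<in> events"
    by (intro sets.sets_Collect_finite_All Fset_finite) measurable
  moreover have "space M - bad \<subseteq> ?good"
    using misclassification_rate_le[OF _ \<sigma> \<tau> _ _ \<Lambda>_def \<Lambda>(2)] n
    unfolding bad_def S_def \<Lambda>_def by (auto simp: not_le)
  moreover have "bad \<in> events" unfolding bad_def by measurable
  moreover have "prob bad \<le> 1 / real n"
    using noise_score_tail_le[OF indep meas \<tau> \<psi> \<Lambda>(1) k n]
    unfolding bad_def S_def by (simp add: emeasure_eq_measure)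
  ultimately show ?thesis using finite_measure_mono[of "space M - bad" ?good] prob_compl[of bad] by linarith
qed

theorem theorem2:
  shows "\<exists>Cs Cg Ce :: real. Cs > 0 \<and> Cg > 0 \<and> Ce > 0 \<and>
    (\<forall>(M :: 'a measure) (n::nat) (k::nat) (d::nat) (\<mu> :: nat \<Rightarrow> nat \<Rightarrow> real) (\<sigma> :: nat \<Rightarrow> nat)
       (g :: nat \<Rightarrow> 'a \<Rightarrow> nat \<Rightarrow> real) (\<tau>::real).
      prob_space M \<and> n \<ge> 4 \<and> k \<ge> 2 \<and> k dvd n
      \<and> (\<forall>i<n. \<sigma> i < k) \<and> (\<forall>a<k. card {i. i < n \<and> \<sigma> i = a} = n div k)
      \<and> (\<forall>i<n. \<forall>l<d. (\<lambda>\<omega>. g i \<omega> l) \<in> borel_measurable M)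
      \<and> prob_space.indep_vars M (\<lambda>_. PiM {..<d} (\<lambda>_. borel))
            (\<lambda>i \<omega>. restrict (g i \<omega>) {..<d}) {..<n}
      \<and> \<tau> > 0 \<and> (\<forall>i<n. psi2_vec M d (g i) \<le> ereal \<tau>)
      \<and> (min_sep d k \<mu> / \<tau>)\<^sup>2 \<ge> Cs * real k
      \<longrightarrow>
      measure M {\<omega> \<in> space M. \<forall>F \<in> Fset n k.
          eta n k d \<mu> \<sigma> (\<lambda>j. g j \<omega>) F \<le> eta n k d \<mu> \<sigma> (\<lambda>j. g j \<omega>) (Fstar n k \<sigma>) \<longrightarrow>
          l1m n k (\<lambda>j a. F j a - Fstar n k \<sigma> j a) / l1m n k (Fstar n k \<sigma>)
            \<le> Cg * exp (- (min_sep d k \<mu> / \<tau>)\<^sup>2 / Ce)}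
      \<ge> 1 - 3 / (2 * real n))"
proof (rule exI[of _ 2048], rule exI[of _ 2], rule exI[of _ 1024], intro conjI allI impI,
    simp_all only: zero_less_numeral, elim conjE, goal_cases)
  case (1 M n k d \<mu> \<sigma> g \<tau>)
  then interpret prob_space M by simp
  have "1 / real n \<le> 3 / (2 * real n)" using 1 by (simp add: divide_simps)
  then show ?case using oracle_misclassification_rate_bound[of n k \<sigma> d g \<tau> \<mu>] 1 by auto
qed

end
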